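(* Consider the generalized linear model described in the context with $m=p\geq 2$ distinct design points $\mathbf{x}_1,\ldots,\mathbf{x}_m$, model matrix $\mathbf{X}\in\mathbb{R}^{m\times p}$ with $\mathrm{rank}(\mathbf{X})=p$, and $\nu_i>0$ for each $i=1,\ldots,m$. Then an allocation $\mathbf{w}_*=(w_1^*,\ldots,w_m^* )^T\in S_m$ is A-optimal if and only if \[ w_i^*=\frac{\sqrt{c_i/\nu_i}}{\sum_{j=1}^m\sqrt{c_j/\nu_j}},\qquad i=1,\ldots,m, \] where $c_i>0$ is the $i$th diagonal element of $(\mathbf{X}\mathbf{X}^T)^{-1}$.
   Context: Generalized linear model (GLM): independent responses $Y_i$ from a one-parameter exponential family with $E(Y_i)=\mu_i$ and $\eta_i=g(\mu_i)=\mathbf{X}_i^T\boldsymbol\beta$, where $g$ is the link function, $\mathbf{X}_i=\mathbf{q}(\mathbf{x}_i)=(q_1(\mathbf{x}_i),\ldots,q_p(\mathbf{x}_i))^T$ for given predictor functions $q_1,\ldots,q_p$ and covariate vectors $\mathbf{x}_i\in\mathbb{R}^d$, and $\boldsymbol\beta\in\mathbb{R}^p$ is a fixed (assumed) parameter vector. Let $\nu_i=(\partial\mu_i/\partial\eta_i)^2/\mathrm{Var}(Y_i)\ge 0$. Given distinct design points $\mathbf{x}_1,\ldots,\mathbf{x}_m$, the model matrix is $\mathbf{X}=(\mathbf{q}(\mathbf{x}_1),\ldots,\mathbf{q}(\mathbf{x}_m))^T\in\mathbb{R}^{m\times p}$. Let $S_m=\{\mathbf{w}=(w_1,\ldots,w_m)^T\in\mathbb{R}^m: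 w_i\ge 0,\ \sum_i w_i=1\}$, $\mathbf{W}=\mathrm{diag}\{w_1\nu_1,\ldots,w_m\nu_m\}$, $f(\mathbf{w})=|\mathbf{X}^T\mathbf{W}\mathbf{X}|$, and $h(\mathbf{w})=[\mathrm{tr}((\mathbf{X}^T\mathbf{W}\mathbf{X})^{-1})]^{-1}$ if $f(\mathbf{w})>0$, $h(\mathbf{w})=0$ if $f(\mathbf{w})=0$. An allocation $\mathbf{w}\in S_m$ is A-optimal if it maximizes $h$ over $S_m$. *)

theory Defs
  imports "HOL-Analysis.Analysis"
begin

definition model_matrix :: "('d \<Rightarrow> real^'p) \<Rightarrow> ('m \<Rightarrow> 'd) \<Rightarrow> real^'p^'m" where
  "model_matrix q x = (\<chi> i j. q (x i) $ j)"

definition simplex_alloc :: "(real^'m) set" where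
  "simplex_alloc = {w. (\<forall>i. w $ i \<ge> 0) \<and> sum (\<lambda>i. w $ i) UNIV = 1}"

definition weight_matrix :: "real^'m \<Rightarrow> real^'m \<Rightarrow> real^'m^'m" where
  "weight_matrix \<nu> w = (\<chi> i j. if i = j then w $ i * \<nu> $ i else 0)"

definition f_det :: "real^'p^'m \<Rightarrow> real^'m \<Rightarrow> real^'m \<Rightarrow> real" where
  "f_det X \<nu> w = det (transpose X ** weight_matrix \<nu> w ** X)"

definition h_A :: "real^'p^'m \<Rightarrow> real^'m \<Rightarrow> real^'m \<Rightarrow> real" where
  "h_A X \<nu> w = (if f_det X \<nu> w > 0
      then inverse (trace (matrix_inv (transpose X ** weight_matrix \<nu> w ** X))) else 0)"

definition A_optimal :: "real^'p^'m \<Rightarrow> real^'m \<Rightarrow> real^'m \<Rightarrow> bool" where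
  "A_optimal X \<nu> w \<longleftrightarrow> w \<in> simplex_alloc \<and> (\<forall>v \<in> simplex_alloc. h_A X \<nu> v \<le> h_A X \<nu> w)"

end

theory Submission
  imports Defs
begin

(* Since m = p and X has full rank, X is invertible; with Y = X\<^sup>-\<^sup>1 and
   W = diag(w\<^sub>i \<nu>\<^sub>i) one gets (X\<^sup>T W X)\<^sup>-\<^sup>1 = Y W\<^sup>-\<^sup>1 Y\<^sup>T, whose trace is
   \<Sum> c\<^sub>i / (\<nu>\<^sub>i w\<^sub>i) with c\<^sub>i = (Y\<^sup>T Y)\<^sub>i\<^sub>i = ((X X\<^sup>T)\<^sup>-\<^sup>1)\<^sub>i\<^sub>i > 0, while
   f(w) = det(X)\<^sup>2 \<Prod> w\<^sub>i \<nu>\<^sub>i vanishes exactly when some w\<^sub>i = 0. So A-optimality means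
   minimising \<Sum> a\<^sub>i / w\<^sub>i over the simplex, a\<^sub>i = c\<^sub>i / \<nu>\<^sub>i, and Cauchy-Schwarz with
   remainder, \<Sum> a\<^sub>i / w\<^sub>i = S\<^sup>2 + \<Sum> (\<surd>a\<^sub>i - S w\<^sub>i)\<^sup>2 / w\<^sub>i with S = \<Sum> \<surd>a\<^sub>i,
   shows that the unique minimiser is w\<^sub>i = \<surd>a\<^sub>i / S. *)

definition diag_mat :: "'a::zero^'n \<Rightarrow> 'a^'n^'n" where
  "diag_mat d = (\<chi> i j. if i = j then d $ i else 0)"

lemma weight_matrix_eq_diag_mat: "weight_matrix \<nu> w = diag_mat (\<chi> i. w $ i * \<nu> $ i)"
  by (simp add: weight_matrix_def diag_mat_def vec_eq_iff)

lemma matrix_mul_diag_mat_right: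
  "((A::'a::semiring_1^'n^'m) ** diag_mat d) $ i $ j = A $ i $ j * d $ j"
  by (simp add: matrix_matrix_mult_def diag_mat_def if_distrib cong: if_cong)

lemma diag_mat_mult: "diag_mat d ** diag_mat e = diag_mat (\<chi> i. d $ i * (e $ i :: 'a::semiring_1))"
  by (simp add: vec_eq_iff matrix_mul_diag_mat_right) (simp add: diag_mat_def)

lemma trace_diag_mat_congruence:
  fixes Y :: "'a::comm_semiring_1^'m^'n"
  shows "trace (Y ** diag_mat e ** transpose Y) = (\<Sum>i\<in>UNIV. e $ i * (transpose Y ** Y) $ i $ i)"
proof -
  have "trace (Y ** diag_mat e ** transpose Y) = trace (transpose Y ** (Y ** diag_mat e))"
    by (rule trace_mul_sym)
  also have "\<dots> = trace (transpose Y ** Y ** diag_mat e)"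
    by (simp only: matrix_mul_assoc)
  finally show ?thesis
    by (simp add: trace_def matrix_mul_diag_mat_right mult.commute)
qed

lemma invertible_matrix_inv:
  assumes "invertible A"
  shows "A ** matrix_inv A = mat 1" and "matrix_inv A ** A = mat 1"
  using someI_ex[OF assms[unfolded invertible_def]] by (simp_all add: matrix_inv_def)

lemma matrix_inv_unique:
  fixes A :: "'a::semiring_1^'n^'m"
  assumes "A ** B = mat 1" and "B ** A = mat 1"
  shows "matrix_inv A = B"
proof -
  have inv: "invertible A" using assms invertible_def by blast
  have "matrix_inv A = matrix_inv A ** (A ** B)" using assms by simp
  also have "\<dots> = B" using invertible_matrix_inv(2)[OF inv] by (simp add: matrix_mul_assoc)
  finally show ?thesis .
qed

lemma invertible_matrix_inv_matrix: "invertible A \<Longrightarrow> invertible (matrix_inv A)"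
  using invertible_matrix_inv invertible_def by blast

lemma matrix_inv_matrix_mult:
  assumes A: "invertible (A::'a::semiring_1^'n^'m)" and B: "invertible (B::'a^'k^'n)"
  shows "matrix_inv (A ** B) = matrix_inv B ** matrix_inv A"
proof (rule matrix_inv_unique)
  have "A ** B ** (matrix_inv B ** matrix_inv A) = A ** (B ** matrix_inv B) ** matrix_inv A"
    by (simp add: matrix_mul_assoc)
  then show "A ** B ** (matrix_inv B ** matrix_inv A) = mat 1"
    by (simp add: A B invertible_matrix_inv)
  have "matrix_inv B ** matrix_inv A ** (A ** B) = matrix_inv B ** (matrix_inv A ** A) ** B"
    by (simp add: matrix_mul_assoc)
  then show "matrix_inv B ** matrix_inv A ** (A ** B) = mat 1"
    by (simp add: A B invertible_matrix_inv)
qed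

lemma
  fixes A :: "'a::comm_semiring_1^'n^'m"
  assumes "invertible A"
  shows invertible_transpose: "invertible (transpose A)"
    and matrix_inv_transpose: "matrix_inv (transpose A) = transpose (matrix_inv A)"
proof -
  have "transpose A ** transpose (matrix_inv A) = mat 1"
    and "transpose (matrix_inv A) ** transpose A = mat 1"
    by (simp_all add: invertible_matrix_inv assms flip: matrix_transpose_mul)
  then show "invertible (transpose A)" "matrix_inv (transpose A) = transpose (matrix_inv A)"
    using invertible_def matrix_inv_unique by blast+
qed

lemma
  fixes d :: "'a::field^'n"
  assumes "\<forall>i. d $ i \<noteq> 0"
  shows invertible_diag_mat: "invertible (diag_mat d)"
    and matrix_inv_diag_mat: "matrix_inv (diag_mat d) = diag_mat (\<chi> i. inverse (d $ i))"
proof -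
  have "diag_mat d ** diag_mat (\<chi> i. inverse (d $ i)) = mat 1"
    and "diag_mat (\<chi> i. inverse (d $ i)) ** diag_mat d = mat 1"
    using assms by (simp_all add: diag_mat_mult) (simp_all add: diag_mat_def mat_def vec_eq_iff)
  then show "invertible (diag_mat d)" "matrix_inv (diag_mat d) = diag_mat (\<chi> i. inverse (d $ i))"
    using invertible_def matrix_inv_unique by blast+
qed

lemma invertible_if_full_rank:
  fixes A :: "real^'n^'m"
  assumes "CARD('m) = CARD('n)" and "rank A = CARD('n)"
  shows "invertible A"
proof -
  have "inj ((*v) A)" using assms(2) full_rank_injective by blast
  then obtain L where L: "L ** A = mat 1" using matrix_left_invertible_injective by blast
  have "surj ((*v) A)" using assms full_rank_surjective[of A] by simp
  then obtain R where R: "A ** R = mat 1" using matrix_right_invertible_surjective by blast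
  have "L = L ** (A ** R)" using R by simp
  also have "\<dots> = R" using L by (simp add: matrix_mul_assoc)
  finally have "L = R" .
  then show ?thesis using L R invertible_def by blast
qed

lemma transpose_mult_self_diag_pos:
  fixes Y :: "real^'n^'m"
  assumes "invertible Y"
  shows "(transpose Y ** Y) $ i $ i > 0"
proof -
  have entry: "(transpose Y ** Y) $ i $ i = (\<Sum>k\<in>UNIV. (Y $ k $ i)\<^sup>2)"
    by (simp add: matrix_matrix_mult_def transpose_def power2_eq_square)
  have "(\<Sum>k\<in>UNIV. matrix_inv Y $ i $ k * Y $ k $ i) = 1"
    using invertible_matrix_inv(2)[OF assms] by (simp add: vec_eq_iff matrix_matrix_mult_def mat_def)
  then obtain k where "Y $ k $ i \<noteq> 0"
    by (metis (no_types, lifting) mult_zero_right sum.neutral zero_neq_one)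
  then show ?thesis
    unfolding entry by (intro sum_pos2[where i = k]) auto
qed

lemma matrix_inv_mult_transpose:
  fixes X :: "'a::comm_semiring_1^'n^'m"
  assumes "invertible X"
  shows "matrix_inv (X ** transpose X) = transpose (matrix_inv X) ** matrix_inv X"
  using assms by (simp add: matrix_inv_matrix_mult invertible_transpose matrix_inv_transpose)

lemma matrix_inv_mult_transpose_diag_pos:
  fixes X :: "real^'n^'m"
  assumes "invertible X"
  shows "matrix_inv (X ** transpose X) $ i $ i > 0"
  using assms by (simp add: matrix_inv_mult_transpose transpose_mult_self_diag_pos
      invertible_matrix_inv_matrix)

lemma det_transpose_diag_mat_congruence:
  fixes X :: "real^'n^'m"
  assumes "CARD('m) = CARD('n)" and "invertible X"
  shows "\<exists>c>0. det (transpose X ** diag_mat d ** X) = c * (\<Prod>k\<in>UNIV. d $ k)"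
proof -
  \<comment> \<open>X is square only up to a bijection of the index types; permuting its rows
    gives a genuinely square matrix X'.\<close>
  obtain \<sigma> :: "'n \<Rightarrow> 'm" where \<sigma>: "bij \<sigma>"
    using finite_same_card_bij[of "UNIV::'n set" "UNIV::'m set"] assms(1) by auto
  define X' :: "real^'n^'n" where "X' = (\<chi> i j. X $ \<sigma> i $ j)"
  define Y' :: "real^'n^'n" where "Y' = (\<chi> j i. matrix_inv X $ j $ \<sigma> i)"
  have entry: "(transpose A ** diag_mat e ** A) $ i $ j = (\<Sum>k\<in>UNIV. A $ k $ i * e $ k * A $ k $ j)"
    for A :: "real^'n^'k" and e i j
    unfolding matrix_matrix_mult_def[of "transpose A ** diag_mat e"] vec_lambda_beta
      matrix_mul_diag_mat_right by (simp add: transpose_def)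
  have reindex: "transpose X ** diag_mat d ** X = transpose X' ** diag_mat (\<chi> i. d $ \<sigma> i) ** X'"
  proof -
    have "(\<Sum>k\<in>UNIV. X $ k $ i * d $ k * X $ k $ j)
        = (\<Sum>k\<in>UNIV. X $ \<sigma> k $ i * d $ \<sigma> k * X $ \<sigma> k $ j)" for i j
      using sum.reindex_bij_betw[OF \<sigma>, of "\<lambda>k. X $ k $ i * d $ k * X $ k $ j"] by simp
    then show ?thesis
      unfolding vec_eq_iff entry X'_def by simp
  qed
  have "X' ** Y' = mat 1"
    using invertible_matrix_inv(1)[OF assms(2)] bij_is_inj[OF \<sigma>]
    by (simp add: X'_def Y'_def matrix_matrix_mult_def vec_eq_iff mat_def inj_eq)
  then have "det X' \<noteq> 0"
    by (metis det_I det_mul mult_zero_left zero_neq_one)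
  then have "(det X')\<^sup>2 > 0"
    by simp
  moreover have "det (diag_mat (\<chi> i. d $ \<sigma> i)) = (\<Prod>k\<in>UNIV. d $ k)"
    by (subst det_diagonal) (auto simp: diag_mat_def prod.reindex_bij_betw[OF \<sigma>])
  ultimately show ?thesis
    unfolding reindex det_mul det_transpose
    by (intro exI[of _ "(det X')\<^sup>2"]) (simp add: power2_eq_square mult_ac)
qed

definition h_diag :: "('m \<Rightarrow> real) \<Rightarrow> real^'m \<Rightarrow> real" where
  "h_diag a v = (if \<forall>i. v $ i > 0 then inverse (\<Sum>i\<in>UNIV. a i / v $ i) else 0)"

lemma h_A_eq_h_diag:
  fixes X :: "real^'p^'m"
  assumes "CARD('m) = CARD('p)" and X: "invertible X"
    and \<nu>: "\<forall>i. \<nu> $ i > 0" and v: "\<forall>i. v $ i \<ge> 0"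
  shows "h_A X \<nu> v = h_diag (\<lambda>i. matrix_inv (X ** transpose X) $ i $ i / \<nu> $ i) v"
proof -
  define Y where "Y = matrix_inv X"
  define d where "d = (\<chi> i. v $ i * \<nu> $ i)"
  have W: "weight_matrix \<nu> v = diag_mat d"
    by (simp add: weight_matrix_eq_diag_mat d_def)
  obtain c where "c > 0" and f_det: "f_det X \<nu> v = c * (\<Prod>k\<in>UNIV. d $ k)"
    using det_transpose_diag_mat_congruence[OF assms(1,2)] unfolding f_det_def W by blast
  show ?thesis
  proof (cases "\<forall>i. v $ i > 0")
    case True
    then have d: "\<forall>i. d $ i > 0"
      using \<nu> by (simp add: d_def)
    then have "f_det X \<nu> v > 0"
      using f_det \<open>c > 0\<close> by (simp add: prod_pos)
    have "matrix_inv (transpose X ** diag_mat d ** X)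
        = Y ** diag_mat (\<chi> i. inverse (d $ i)) ** transpose Y"
      using d X by (simp add: Y_def matrix_inv_matrix_mult invertible_mult invertible_transpose
          invertible_diag_mat matrix_inv_diag_mat matrix_inv_transpose matrix_mul_assoc
          less_imp_neq[symmetric])
    then have "trace (matrix_inv (transpose X ** weight_matrix \<nu> v ** X))
        = (\<Sum>i\<in>UNIV. inverse (d $ i) * (transpose Y ** Y) $ i $ i)"
      by (simp only: W trace_diag_mat_congruence vec_lambda_beta)
    also have "\<dots> = (\<Sum>i\<in>UNIV. matrix_inv (X ** transpose X) $ i $ i / \<nu> $ i / v $ i)"
      using X by (simp add: Y_def matrix_inv_mult_transpose d_def field_simps)
    finally show ?thesis
      using True \<open>f_det X \<nu> v > 0\<close> by (simp add: h_A_def h_diag_def)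
  next
    case False
    then obtain k where "d $ k = 0"
      using v by (force simp: d_def less_le)
    then have "f_det X \<nu> v = 0"
      by (auto simp: f_det prod_zero_iff)
    then show ?thesis
      using False by (simp only: h_A_def h_diag_def if_False less_irrefl)
  qed
qed

lemma sum_divide_eq_sum_sqrt_squared_plus:
  fixes a v :: "'i \<Rightarrow> real"
  assumes "\<forall>i\<in>I. a i \<ge> 0" and "\<forall>i\<in>I. v i > 0" and "sum v I = 1"
  defines "S \<equiv> \<Sum>i\<in>I. sqrt (a i)"
  shows "(\<Sum>i\<in>I. a i / v i) = S\<^sup>2 + (\<Sum>i\<in>I. (sqrt (a i) - S * v i)\<^sup>2 / v i)"
proof -
  have "(sqrt (a i) - S * v i)\<^sup>2 / v i = a i / v i - 2 * S * sqrt (a i) + S\<^sup>2 * v i" if "i \<in> I" for i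
  proof -
    have "v i > 0" and "a i \<ge> 0"
      using assms(1,2) that by auto
    then show ?thesis
      by (simp add: field_simps power2_eq_square)
  qed
  then have "(\<Sum>i\<in>I. (sqrt (a i) - S * v i)\<^sup>2 / v i)
      = (\<Sum>i\<in>I. a i / v i) - 2 * S * S + S\<^sup>2 * sum v I"
    by (simp add: sum.distrib sum_subtractf sum_distrib_left S_def)
  then show ?thesis
    using assms(3) by (simp add: power2_eq_square)
qed

context
  fixes a :: "'m::finite \<Rightarrow> real"
  assumes a_pos: "\<forall>i. a i > 0"
begin

lemma sum_sqrt_pos: "(\<Sum>i\<in>UNIV. sqrt (a i)) > 0"
  using a_pos by (intro sum_pos) auto

lemma h_diag_le:
  assumes "v \<in> simplex_alloc"
  shows "h_diag a v \<le> inverse ((\<Sum>i\<in>UNIV. sqrt (a i))\<^sup>2)"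
proof (cases "\<forall>i. v $ i > 0")
  case True
  have "(\<Sum>i\<in>UNIV. (sqrt (a i) - (\<Sum>j\<in>UNIV. sqrt (a j)) * v $ i)\<^sup>2 / v $ i) \<ge> 0"
    using True by (intro sum_nonneg) (simp add: less_imp_le)
  then have "(\<Sum>i\<in>UNIV. sqrt (a i))\<^sup>2 \<le> (\<Sum>i\<in>UNIV. a i / v $ i)"
    using sum_divide_eq_sum_sqrt_squared_plus[of UNIV a "\<lambda>i. v $ i"] a_pos True assms
    by (simp add: simplex_alloc_def less_imp_le)
  then show ?thesis
    using True sum_sqrt_pos by (simp add: h_diag_def le_imp_inverse_le)
qed (auto simp: h_diag_def)

lemma h_diag_eq_max_iff:
  assumes "v \<in> simplex_alloc"
  shows "h_diag a v = inverse ((\<Sum>i\<in>UNIV. sqrt (a i))\<^sup>2)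
    \<longleftrightarrow> (\<forall>i. v $ i = sqrt (a i) / (\<Sum>j\<in>UNIV. sqrt (a j)))"
  (is "_ = inverse (?S\<^sup>2) \<longleftrightarrow> _")
proof
  assume max: "h_diag a v = inverse (?S\<^sup>2)"
  then have v_pos: "\<forall>i. v $ i > 0"
    using sum_sqrt_pos by (auto simp: h_diag_def split: if_splits)
  have "(\<Sum>i\<in>UNIV. a i / v $ i) = ?S\<^sup>2"
    using max v_pos by (simp add: h_diag_def)
  then have "(\<Sum>i\<in>UNIV. (sqrt (a i) - ?S * v $ i)\<^sup>2 / v $ i) = 0"
    using sum_divide_eq_sum_sqrt_squared_plus[of UNIV a "\<lambda>i. v $ i"] a_pos v_pos assms
    by (simp add: simplex_alloc_def less_imp_le)
  then have terms_zero: "(sqrt (a i) - ?S * v $ i)\<^sup>2 / v $ i = 0" for i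
    using v_pos by (subst (asm) sum_nonneg_eq_0_iff) (auto simp: less_imp_le)
  have "sqrt (a i) = ?S * v $ i" for i
    using terms_zero[of i] v_pos[rule_format, of i] by (simp add: less_le)
  then show "\<forall>i. v $ i = sqrt (a i) / ?S"
    using sum_sqrt_pos by (metis less_irrefl nonzero_mult_div_cancel_left)
next
  assume v: "\<forall>i. v $ i = sqrt (a i) / ?S"
  then have "a i / v $ i = ?S * (a i / sqrt (a i))" for i
    by simp
  then have "a i / v $ i = ?S * sqrt (a i)" for i
    using a_pos by (simp add: real_div_sqrt less_imp_le)
  moreover have "\<forall>i. v $ i > 0"
    using v a_pos sum_sqrt_pos by simp
  ultimately show "h_diag a v = inverse (?S\<^sup>2)"
    by (simp add: h_diag_def power2_eq_square sum_distrib_left)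
qed

lemma h_diag_maximizer_iff:
  assumes "w \<in> simplex_alloc"
  shows "(\<forall>v\<in>simplex_alloc. h_diag a v \<le> h_diag a w)
    \<longleftrightarrow> (\<forall>i. w $ i = sqrt (a i) / (\<Sum>j\<in>UNIV. sqrt (a j)))"
proof -
  define w' :: "real^'m" where "w' = (\<chi> i. sqrt (a i) / (\<Sum>j\<in>UNIV. sqrt (a j)))"
  have "w' \<in> simplex_alloc"
    using a_pos sum_sqrt_pos
    by (simp add: simplex_alloc_def w'_def less_imp_le flip: sum_divide_distrib)
  then have "h_diag a w' = inverse ((\<Sum>i\<in>UNIV. sqrt (a i))\<^sup>2)"
    by (simp add: h_diag_eq_max_iff w'_def)
  then show ?thesis
    using h_diag_le h_diag_eq_max_iff assms \<open>w' \<in> simplex_alloc\<close>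
    by (metis order_antisym)
qed

end

theorem theorem1:
  fixes q :: "'d \<Rightarrow> real^'p::finite"
    and x :: "'m::finite \<Rightarrow> 'd"
    and \<nu> :: "real^'m"
    and w :: "real^'m"
  assumes "CARD('m) = CARD('p)"
    and "CARD('p) \<ge> 2"
    and "inj x"
    and "rank (model_matrix q x) = CARD('p)"
    and "\<forall>i. \<nu> $ i > 0"
    and "w \<in> simplex_alloc"
  shows "A_optimal (model_matrix q x) \<nu> w \<longleftrightarrow>
    (let X = model_matrix q x;
         c = (\<lambda>i. matrix_inv (X ** transpose X) $ i $ i)
     in \<forall>i. w $ i = sqrt (c i / \<nu> $ i) / (\<Sum>j\<in>UNIV. sqrt (c j / \<nu> $ j)))"
proof -
  define X where "X = model_matrix q x"
  define a where "a = (\<lambda>i. matrix_inv (X ** transpose X) $ i $ i / \<nu> $ i)"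
  have X: "invertible X"
    using invertible_if_full_rank assms(1,4) X_def by blast
  have a_pos: "\<forall>i. a i > 0"
    using matrix_inv_mult_transpose_diag_pos[OF X] assms(5) by (simp add: a_def)
  have "h_A X \<nu> v = h_diag a v" if "v \<in> simplex_alloc" for v
    using h_A_eq_h_diag[OF assms(1) X assms(5)] that by (simp add: simplex_alloc_def a_def)
  then have "A_optimal X \<nu> w \<longleftrightarrow> (\<forall>v\<in>simplex_alloc. h_diag a v \<le> h_diag a w)"
    using assms(6) by (simp add: A_optimal_def)
  also have "\<dots> \<longleftrightarrow> (\<forall>i. w $ i = sqrt (a i) / (\<Sum>j\<in>UNIV. sqrt (a j)))"
    using h_diag_maximizer_iff[OF a_pos assms(6)] .
  finally show ?thesis
    by (simp add: X_def a_def Let_def)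
qed

end
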